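(* Let $k,l\in\mathbb{N}$ and $\omega=e^{2\pi i/k}$. The space $$\mathrm{Hol}^{k,l}(\mathbb{C}^*,\mathbb{C})=\{f\in\mathrm{Hol}(\mathbb{C}^*,\mathbb{C}):\ f(\omega z)=\omega^l f(z)\ \text{for all } z\in\mathbb{C}^*\},$$ graded by $\|f\|_n=\sup_{z\in A_n}|f(z)|$ with $A_n=\{z:e^{-n}\le|z|\le e^n\}$, is a tame Fréchet space.
   Context: $\mathrm{Hol}(\mathbb{C}^*,\mathbb{C})$ is the space of holomorphic functions on $\mathbb{C}^*$. A graded Fréchet space has seminorms $\|\cdot\|_0\le\|\cdot\|_1\le\cdots$ defining its topology. For a Banach space $B$, $\Sigma(B)$ is the space of sequences $(f_k)_{k\ge0}$ in $B$ with $\sum_k e^{nk}\|f_k\|_B<\infty$ for all $n$, graded by these sums. A linear map between graded spaces is tame if $\|\varphi f\|_n\le C(n)\|f\|_{n+r}$ for some $r,b$, constants $C(n)$, all $n\ge b$. A tame Fréchet space is a graded Fréchet space $F$ admitting tame linear maps $\varphi:F\to\Sigma(B)$, $\psi:\Sigma(B)\to F$ with $\psi\circ\varphi=\mathrm{id}$ for some Banach space $B$. *)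

theory Defs
  imports "HOL-Analysis.Analysis" "HOL-Library.Function_Algebras"
begin

(* Pointwise real vector space structure on function spaces
   (plus/zero/minus come from HOL-Library.Function_Algebras). *)
instantiation "fun" :: (type, real_vector) real_vector
begin
definition scaleR_fun :: "real \<Rightarrow> ('a \<Rightarrow> 'b) \<Rightarrow> 'a \<Rightarrow> 'b"
  where "scaleR_fun a f = (\<lambda>x. a *\<^sub>R f x)"
instance
  by standard (simp_all add: scaleR_fun_def fun_eq_iff scaleR_add_right scaleR_add_left)
end

definition lin_subspace :: "'a::real_vector set \<Rightarrow> bool" where
  "lin_subspace F \<longleftrightarrow> 0 \<in> F \<and> (\<forall>x\<in>F. \<forall>y\<in>F. x + y \<in> F) \<and> (\<forall>a. \<forall>x\<in>F. a *\<^sub>R x \<in> F)"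

definition seminorm_on :: "'a::real_vector set \<Rightarrow> ('a \<Rightarrow> real) \<Rightarrow> bool" where
  "seminorm_on F p \<longleftrightarrow>
     (\<forall>x\<in>F. 0 \<le> p x) \<and> (\<forall>x\<in>F. \<forall>y\<in>F. p (x + y) \<le> p x + p y) \<and>
     (\<forall>a. \<forall>x\<in>F. p (a *\<^sub>R x) = \<bar>a\<bar> * p x)"

definition banach_on :: "'b::real_vector set \<Rightarrow> ('b \<Rightarrow> real) \<Rightarrow> bool" where
  "banach_on V N \<longleftrightarrow> lin_subspace V \<and> seminorm_on V N \<and>
     (\<forall>x\<in>V. N x = 0 \<longrightarrow> x = 0) \<and>
     (\<forall>X. (\<forall>m::nat. X m \<in> V) \<and> (\<forall>e>0. \<exists>M. \<forall>m\<ge>M. \<forall>n\<ge>M. N (X m - X n) < e)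
        \<longrightarrow> (\<exists>x\<in>V. \<forall>e>0. \<exists>M. \<forall>n\<ge>M. N (X n - x) < e))"

definition graded_frechet :: "'a::real_vector set \<Rightarrow> (nat \<Rightarrow> 'a \<Rightarrow> real) \<Rightarrow> bool" where
  "graded_frechet F nrm \<longleftrightarrow> lin_subspace F \<and> (\<forall>n. seminorm_on F (nrm n)) \<and>
     (\<forall>n. \<forall>f\<in>F. nrm n f \<le> nrm (Suc n) f) \<and>
     (\<forall>f\<in>F. (\<forall>n. nrm n f = 0) \<longrightarrow> f = 0) \<and>
     (\<forall>X. (\<forall>m::nat. X m \<in> F) \<and> (\<forall>n. \<forall>e>0. \<exists>M. \<forall>i\<ge>M. \<forall>j\<ge>M. nrm n (X i - X j) < e)
        \<longrightarrow> (\<exists>f\<in>F. \<forall>n. \<forall>e>0. \<exists>M. \<forall>i\<ge>M. nrm n (X i - f) < e))"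

definition tame_map :: "'a::real_vector set \<Rightarrow> (nat \<Rightarrow> 'a \<Rightarrow> real) \<Rightarrow>
    'c::real_vector set \<Rightarrow> (nat \<Rightarrow> 'c \<Rightarrow> real) \<Rightarrow> ('a \<Rightarrow> 'c) \<Rightarrow> bool" where
  "tame_map F nF G nG \<phi> \<longleftrightarrow> (\<forall>f\<in>F. \<phi> f \<in> G) \<and>
     (\<forall>f\<in>F. \<forall>g\<in>F. \<phi> (f + g) = \<phi> f + \<phi> g) \<and> (\<forall>a. \<forall>f\<in>F. \<phi> (a *\<^sub>R f) = a *\<^sub>R \<phi> f) \<and>
     (\<exists>r b::nat. \<exists>C::nat \<Rightarrow> real. \<forall>n\<ge>b. \<forall>f\<in>F. nG n (\<phi> f) \<le> C n * nF (n + r) f)"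

definition Sigma_space :: "'b::real_vector set \<Rightarrow> ('b \<Rightarrow> real) \<Rightarrow> (nat \<Rightarrow> 'b) set" where
  "Sigma_space V N = {s. (\<forall>k. s k \<in> V) \<and>
      (\<forall>n::nat. summable (\<lambda>k. exp (real n * real k) * N (s k)))}"

definition Sigma_norm :: "('b \<Rightarrow> real) \<Rightarrow> nat \<Rightarrow> (nat \<Rightarrow> 'b) \<Rightarrow> real" where
  "Sigma_norm N n s = (\<Sum>k. exp (real n * real k) * N (s k))"

(* Tame Frechet space.  The Banach space B is represented as a linear subspace V
   of the real vector space nat => real (of dimension continuum) with a complete norm N. *)
definition tame_frechet :: "'a::real_vector set \<Rightarrow> (nat \<Rightarrow> 'a \<Rightarrow> real) \<Rightarrow> bool" where
  "tame_frechet F nrm \<longleftrightarrow> graded_frechet F nrm \<and>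
     (\<exists>(V :: (nat \<Rightarrow> real) set) N \<phi> \<psi>. banach_on V N \<and>
        tame_map F nrm (Sigma_space V N) (Sigma_norm N) \<phi> \<and>
        tame_map (Sigma_space V N) (Sigma_norm N) F nrm \<psi> \<and>
        (\<forall>f\<in>F. \<psi> (\<phi> f) = f))"

(* Hol^{k,l}(C^*,C); functions are normalised by f 0 = 0 (the value at 0 is irrelevant) *)
definition Hol_kl :: "nat \<Rightarrow> nat \<Rightarrow> (complex \<Rightarrow> complex) set" where
  "Hol_kl k l = {f. f holomorphic_on (- {0}) \<and> f 0 = 0 \<and>
      (\<forall>z. z \<noteq> 0 \<longrightarrow> f (exp (2 * pi * \<i> / of_nat k) * z) = exp (2 * pi * \<i> / of_nat k) ^ l * f z)}"

definition annulus_A :: "nat \<Rightarrow> complex set" where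
  "annulus_A n = {z. exp (- real n) \<le> cmod z \<and> cmod z \<le> exp (real n)}"

definition hol_norm :: "nat \<Rightarrow> (complex \<Rightarrow> complex) \<Rightarrow> real" where
  "hol_norm n f = (SUP z\<in>annulus_A n. cmod (f z))"

end

theory Submission
  imports Defs "HOL-Complex_Analysis.Complex_Analysis"
begin

text \<open>
  The embedding sends \<open>f\<close> to its Laurent coefficients, a sequence of pairs in \<open>\<complex>\<^sup>2\<close>.
  The Cauchy estimates on the two boundary circles of the annulus \<open>A (n + 1)\<close> bound the
  \<open>k\<close>-th pair by \<open>exp (- (n + 1) k)\<close> times the \<open>(n + 1)\<close>-st seminorm of \<open>f\<close>, so the
  \<open>n\<close>-th \<open>\<Sigma>\<close>-norm of the coefficients is at most a constant multiple of that seminorm.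
  Conversely, any coefficient sequence in \<open>\<Sigma>(\<complex>\<^sup>2)\<close> defines a Laurent series converging
  uniformly on every annulus \<open>A n\<close>, with sup norm at most \<open>exp n\<close> times the \<open>n\<close>-th \<open>\<Sigma>\<close>-norm.
  Averaging \<open>g (\<omega>\<^sup>m z) / \<omega>\<^sup>l\<^sup>m\<close> over \<open>m < k\<close> projects onto \<open>Hol\<^sup>k\<^sup>,\<^sup>l\<close> without increasing
  sup norms on the rotation invariant annuli; composed with the series this is the tame left
  inverse, by the Laurent expansion of \<open>f\<close>.
\<close>

lemma scaleR_fun_apply [simp]: "(a *\<^sub>R f) x = a *\<^sub>R f x"
  by (simp add: scaleR_fun_def)

section \<open>Contour integrals around the origin\<close>

lemma contour_integrable_circlepath_punctured:
  assumes "g holomorphic_on -{0}" and "0 < r"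
  shows "g contour_integrable_on circlepath 0 r"
  by (rule contour_integrable_holomorphic_simple[OF assms(1)]) (use assms(2) in auto)

lemma contour_integral_circlepath_eq_radius:
  assumes g: "g holomorphic_on -{0}" and r: "0 < r" and s: "0 < s"
  shows "contour_integral (circlepath 0 r) g = contour_integral (circlepath 0 s) g"
proof (rule Cauchy_theorem_homotopic_loops[OF _ _ g])
  show "homotopic_loops (-{0}) (circlepath 0 r) (circlepath 0 s)"
  proof (rule homotopic_loops_linear)
    fix t :: real
    show "closed_segment (circlepath 0 r t) (circlepath 0 s t) \<subseteq> -{0}"
    proof
      fix y assume "y \<in> closed_segment (circlepath 0 r t) (circlepath 0 s t)"
      then obtain u where u: "0 \<le> u" "u \<le> 1"
        and y: "y = (1 - u) *\<^sub>R circlepath 0 r t + u *\<^sub>R circlepath 0 s t"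
        by (auto simp: closed_segment_def)
      define c where "c = (1 - u) * r + u * s"
      have "y = complex_of_real c * exp (2 * of_real pi * \<i> * of_real t)"
        by (simp add: y c_def circlepath scaleR_conv_of_real algebra_simps)
      moreover have "c > 0"
        unfolding c_def using u r s by (smt (verit) mult_nonneg_nonneg mult_pos_pos)
      ultimately show "y \<in> -{0}" by auto
    qed
  qed auto
qed auto

lemma contour_integral_sums_circlepath:
  assumes r: "0 < r" and int: "\<And>k. T k contour_integrable_on circlepath z r"
    and bnd: "\<And>k w. w \<in> sphere z r \<Longrightarrow> norm (T k w) \<le> M k" and M: "summable M"
    and sums: "\<And>w. w \<in> sphere z r \<Longrightarrow> (\<lambda>k. T k w) sums G w"
  shows "(\<lambda>k. contour_integral (circlepath z r) (T k)) sums contour_integral (circlepath z r) G"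
proof -
  have "uniform_limit (sphere z r) (\<lambda>n w. \<Sum>k<n. T k w) (\<lambda>w. \<Sum>k. T k w) sequentially"
    by (rule Weierstrass_m_test[OF bnd M])
  moreover have "\<forall>\<^sub>F n in sequentially. (\<lambda>w. \<Sum>k<n. T k w) contour_integrable_on circlepath z r"
    by (intro always_eventually allI contour_integrable_sum) (auto intro: int)
  ultimately have "(\<lambda>n. contour_integral (circlepath z r) (\<lambda>w. \<Sum>k<n. T k w))
      \<longlonglongrightarrow> contour_integral (circlepath z r) (\<lambda>w. \<Sum>k. T k w)"
    using r by (intro contour_integral_uniform_limit_circlepath(2)) auto
  moreover have "contour_integral (circlepath z r) (\<lambda>w. \<Sum>k<n. T k w)
      = (\<Sum>k<n. contour_integral (circlepath z r) (T k))" for n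
    by (rule contour_integral_sum) (auto intro: int)
  moreover have "contour_integral (circlepath z r) (\<lambda>w. \<Sum>k. T k w) = contour_integral (circlepath z r) G"
  proof (rule contour_integral_eq)
    fix w assume "w \<in> path_image (circlepath z r)"
    then have "w \<in> sphere z r" using r by simp
    then show "(\<Sum>k. T k w) = G w" using sums sums_unique by metis
  qed
  ultimately show ?thesis
    unfolding sums_def by simp
qed

lemma bounded_on_sphere:
  assumes "f holomorphic_on -{0}" and "0 < r"
  obtains B where "\<And>w. w \<in> sphere 0 r \<Longrightarrow> norm (f w) \<le> B"
proof -
  have "compact (f ` sphere 0 r)"
    using assms by (intro compact_continuous_image holomorphic_on_imp_continuous_on
        holomorphic_on_subset[OF assms(1)]) auto
  then show ?thesis
    using that compact_imp_bounded by (force simp: bounded_iff)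
qed

lemma Cauchy_integral_formula_annulus:
  assumes f: "f holomorphic_on -{0}" and r: "0 < r" "r < cmod z" and R: "cmod z < R"
  shows "contour_integral (circlepath 0 R) (\<lambda>w. f w / (w - z))
       - contour_integral (circlepath 0 r) (\<lambda>w. f w / (w - z)) = 2 * of_real pi * \<i> * f z"
proof -
  define h where "h w = (if w = z then deriv f z else (f w - f z) / (w - z))" for w
  have h: "h holomorphic_on -{0}"
    unfolding h_def by (rule pole_lemma_open[OF f]) auto
  have circle: "contour_integral (circlepath 0 \<rho>) (\<lambda>w. f w / (w - z))
      = contour_integral (circlepath 0 \<rho>) h
        + f z * (2 * of_real pi * \<i> * winding_number (circlepath 0 \<rho>) z)"
    if \<rho>: "0 < \<rho>" "\<rho> \<noteq> cmod z" for \<rho>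
  proof (rule contour_integral_unique, rule has_contour_integral_eq)
    have "z \<notin> path_image (circlepath 0 \<rho>)"
      using \<rho> by auto
    then have "((\<lambda>w. 1 / (w - z)) has_contour_integral
        2 * of_real pi * \<i> * winding_number (circlepath 0 \<rho>) z) (circlepath 0 \<rho>)"
      using has_contour_integral_winding_number[OF valid_path_circlepath] by simp
    then show "((\<lambda>w. h w + f z * (1 / (w - z))) has_contour_integral
        contour_integral (circlepath 0 \<rho>) h
        + f z * (2 * of_real pi * \<i> * winding_number (circlepath 0 \<rho>) z)) (circlepath 0 \<rho>)"
      by (intro has_contour_integral_add has_contour_integral_lmul has_contour_integral_integral
          contour_integrable_circlepath_punctured[OF h] \<rho>)
    fix w assume "w \<in> path_image (circlepath 0 \<rho>)"
    then have "w \<noteq> z" using \<rho> by auto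
    then show "h w + f z * (1 / (w - z)) = f w / (w - z)"
      by (simp add: h_def diff_divide_distrib)
  qed
  have "winding_number (circlepath 0 R) z = 1"
    using R by (intro winding_number_circlepath) auto
  moreover have "winding_number (circlepath 0 r) z = 0"
    using r by (intro winding_number_zero_outside[of _ "cball 0 r"]) auto
  moreover have "contour_integral (circlepath 0 R) h = contour_integral (circlepath 0 r) h"
    using R r by (intro contour_integral_circlepath_eq_radius[OF h]) auto
  ultimately show ?thesis
    using circle[of R] circle[of r] r R by simp
qed

lemma Cauchy_kernel_sums_outer:
  assumes f: "f holomorphic_on -{0}" and R: "cmod z < R"
  shows "(\<lambda>k. contour_integral (circlepath 0 R) (\<lambda>w. f w * z ^ k / w ^ Suc k))
      sums contour_integral (circlepath 0 R) (\<lambda>w. f w / (w - z))"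
proof -
  have R0: "0 < R" using R norm_ge_zero[of z] by linarith
  obtain B where B: "\<And>w. w \<in> sphere 0 R \<Longrightarrow> cmod (f w) \<le> B"
    using bounded_on_sphere[OF f R0] by blast
  show ?thesis
  proof (rule contour_integral_sums_circlepath[OF R0])
    show "(\<lambda>w. f w * z ^ k / w ^ Suc k) contour_integrable_on circlepath 0 R" for k
      by (intro contour_integrable_circlepath_punctured R0) (auto intro!: holomorphic_intros f)
    show "cmod (f w * z ^ k / w ^ Suc k) \<le> B * (cmod z / R) ^ k / R"
      if w: "w \<in> sphere 0 R" for w k
    proof -
      have "cmod (f w * z ^ k / w ^ Suc k) = cmod (f w) * (cmod z / R) ^ k / R"
        using w by (simp add: norm_mult norm_divide norm_power power_divide)
      also have "\<dots> \<le> B * (cmod z / R) ^ k / R"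
        using R0 B[OF w] by (intro divide_right_mono mult_right_mono) auto
      finally show ?thesis .
    qed
    show "summable (\<lambda>k. B * (cmod z / R) ^ k / R)"
      using R R0 by (intro summable_divide summable_mult summable_geometric) auto
    fix w :: complex assume w: "w \<in> sphere 0 R"
    then have "w \<noteq> 0" "w \<noteq> z" and q: "norm (z / w) < 1"
      using R R0 by (auto simp: norm_divide)
    then have "(\<lambda>k. f w / w * (z / w) ^ k) sums (f w / w * (1 / (1 - z / w)))"
      by (intro sums_mult geometric_sums)
    also have "f w / w * (1 / (1 - z / w)) = f w / (w - z)"
      using \<open>w \<noteq> 0\<close> \<open>w \<noteq> z\<close> by (simp add: field_simps)
    finally show "(\<lambda>k. f w * z ^ k / w ^ Suc k) sums (f w / (w - z))"
      by (simp add: power_divide)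
  qed
qed

lemma Cauchy_kernel_sums_inner:
  assumes f: "f holomorphic_on -{0}" and r: "0 < r" "r < cmod z"
  shows "(\<lambda>k. contour_integral (circlepath 0 r) (\<lambda>w. f w * w ^ k / z ^ Suc k))
      sums contour_integral (circlepath 0 r) (\<lambda>w. - (f w / (w - z)))"
proof -
  obtain B where B: "\<And>w. w \<in> sphere 0 r \<Longrightarrow> cmod (f w) \<le> B"
    using bounded_on_sphere[OF f r(1)] by blast
  show ?thesis
  proof (rule contour_integral_sums_circlepath[OF r(1)])
    show "(\<lambda>w. f w * w ^ k / z ^ Suc k) contour_integrable_on circlepath 0 r" for k
      by (intro contour_integrable_circlepath_punctured r) (auto intro!: holomorphic_intros f)
    show "cmod (f w * w ^ k / z ^ Suc k) \<le> B * (r / cmod z) ^ k / cmod z"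
      if w: "w \<in> sphere 0 r" for w k
    proof -
      have "cmod (f w * w ^ k / z ^ Suc k) = cmod (f w) * (r / cmod z) ^ k / cmod z"
        using w by (simp add: norm_mult norm_divide norm_power power_divide)
      also have "\<dots> \<le> B * (r / cmod z) ^ k / cmod z"
        using r B[OF w] by (intro divide_right_mono mult_right_mono) auto
      finally show ?thesis .
    qed
    show "summable (\<lambda>k. B * (r / cmod z) ^ k / cmod z)"
      using r by (intro summable_divide summable_mult summable_geometric) (auto simp: divide_simps)
    fix w :: complex assume w: "w \<in> sphere 0 r"
    then have "z \<noteq> 0" "w \<noteq> z" and q: "norm (w / z) < 1"
      using r by (auto simp: norm_divide divide_simps)
    then have "(\<lambda>k. f w / z * (w / z) ^ k) sums (f w / z * (1 / (1 - w / z)))"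
      by (intro sums_mult geometric_sums)
    also have "f w / z * (1 / (1 - w / z)) = - (f w / (w - z))"
      using \<open>z \<noteq> 0\<close> \<open>w \<noteq> z\<close> by (simp add: field_simps)
    finally show "(\<lambda>k. f w * w ^ k / z ^ Suc k) sums (- (f w / (w - z)))"
      by (simp add: power_divide)
  qed
qed

section \<open>Laurent coefficients\<close>

text \<open>\<open>laurent_coeff_neg f k\<close> is the coefficient of \<open>z\<^sup>-\<^sup>(\<^sup>k\<^sup>+\<^sup>1\<^sup>)\<close>.\<close>

definition laurent_coeff_pos :: "(complex \<Rightarrow> complex) \<Rightarrow> nat \<Rightarrow> complex" where
  "laurent_coeff_pos f k = contour_integral (circlepath 0 1) (\<lambda>w. f w / w ^ Suc k) / (2 * of_real pi * \<i>)"

definition laurent_coeff_neg :: "(complex \<Rightarrow> complex) \<Rightarrow> nat \<Rightarrow> complex" where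
  "laurent_coeff_neg f k = contour_integral (circlepath 0 1) (\<lambda>w. f w * w ^ k) / (2 * of_real pi * \<i>)"

lemma contour_integral_circlepath_laurent_coeff_pos:
  assumes f: "f holomorphic_on -{0}" and "0 < \<rho>"
  shows "contour_integral (circlepath 0 \<rho>) (\<lambda>w. f w / w ^ Suc k) = 2 * of_real pi * \<i> * laurent_coeff_pos f k"
proof -
  have "(\<lambda>w. f w / w ^ Suc k) holomorphic_on -{0}"
    by (auto intro!: holomorphic_intros f)
  from contour_integral_circlepath_eq_radius[OF this \<open>0 < \<rho>\<close> zero_less_one] show ?thesis
    by (simp add: laurent_coeff_pos_def)
qed

lemma contour_integral_circlepath_laurent_coeff_neg:
  assumes f: "f holomorphic_on -{0}" and "0 < \<rho>"
  shows "contour_integral (circlepath 0 \<rho>) (\<lambda>w. f w * w ^ k) = 2 * of_real pi * \<i> * laurent_coeff_neg f k"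
proof -
  have "(\<lambda>w. f w * w ^ k) holomorphic_on -{0}"
    by (auto intro!: holomorphic_intros f)
  from contour_integral_circlepath_eq_radius[OF this \<open>0 < \<rho>\<close> zero_less_one] show ?thesis
    by (simp add: laurent_coeff_neg_def)
qed

lemma laurent_expansion:
  assumes f: "f holomorphic_on -{0}" and z: "z \<noteq> 0"
  shows "(\<lambda>k. laurent_coeff_pos f k * z ^ k + laurent_coeff_neg f k / z ^ Suc k) sums f z"
proof -
  define c :: complex where "c = 2 * of_real pi * \<i>"
  define r R where "r = cmod z / 2" and "R = 2 * cmod z"
  have r: "0 < r" "r < cmod z" and R: "cmod z < R" and "0 < R"
    using z by (auto simp: r_def R_def)
  have outer: "contour_integral (circlepath 0 R) (\<lambda>w. f w * z ^ k / w ^ Suc k)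
      = c * (laurent_coeff_pos f k * z ^ k)" for k
  proof -
    have "contour_integral (circlepath 0 R) (\<lambda>w. z ^ k * (f w / w ^ Suc k))
        = z ^ k * contour_integral (circlepath 0 R) (\<lambda>w. f w / w ^ Suc k)"
      using \<open>0 < R\<close> by (intro contour_integral_lmul contour_integrable_circlepath_punctured)
        (auto intro!: holomorphic_intros f)
    then show ?thesis
      using contour_integral_circlepath_laurent_coeff_pos[OF f \<open>0 < R\<close>]
      by (simp add: c_def field_simps)
  qed
  have inner: "contour_integral (circlepath 0 r) (\<lambda>w. f w * w ^ k / z ^ Suc k)
      = c * (laurent_coeff_neg f k / z ^ Suc k)" for k
  proof -
    have "contour_integral (circlepath 0 r) (\<lambda>w. f w * w ^ k / z ^ Suc k)
        = contour_integral (circlepath 0 r) (\<lambda>w. f w * w ^ k) / z ^ Suc k"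
      using r by (intro contour_integral_div contour_integrable_circlepath_punctured)
        (auto intro!: holomorphic_intros f)
    then show ?thesis
      using contour_integral_circlepath_laurent_coeff_neg[OF f r(1)] by (simp add: c_def)
  qed
  have "(\<lambda>k. c * (laurent_coeff_pos f k * z ^ k) + c * (laurent_coeff_neg f k / z ^ Suc k))
      sums (contour_integral (circlepath 0 R) (\<lambda>w. f w / (w - z))
            - contour_integral (circlepath 0 r) (\<lambda>w. f w / (w - z)))"
    using sums_add[OF Cauchy_kernel_sums_outer[OF f R] Cauchy_kernel_sums_inner[OF f r]]
    unfolding outer inner contour_integral_neg by simp
  then have "(\<lambda>k. c * (laurent_coeff_pos f k * z ^ k + laurent_coeff_neg f k / z ^ Suc k)) sums (c * f z)"
    unfolding Cauchy_integral_formula_annulus[OF f r R] c_def by (simp add: distrib_left)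
  moreover have "c \<noteq> 0" by (simp add: c_def)
  ultimately show ?thesis
    by (simp add: sums_mult_iff del: power_Suc)
qed

lemma norm_laurent_coeff_pos_le:
  assumes f: "f holomorphic_on -{0}" and \<rho>: "0 < \<rho>" and B: "\<And>w. cmod w = \<rho> \<Longrightarrow> cmod (f w) \<le> B"
  shows "cmod (laurent_coeff_pos f k) \<le> B / \<rho> ^ k"
proof -
  have "0 \<le> B" using B[of "of_real \<rho>"] \<rho> by (smt (verit) norm_ge_zero norm_of_real)
  have "cmod (contour_integral (circlepath 0 \<rho>) (\<lambda>w. f w / w ^ Suc k)) \<le> B / \<rho> ^ Suc k * (2 * pi * \<rho>)"
  proof (rule has_contour_integral_bound_circlepath[OF has_contour_integral_integral])
    show "(\<lambda>w. f w / w ^ Suc k) contour_integrable_on circlepath 0 \<rho>"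
      using \<rho> by (intro contour_integrable_circlepath_punctured) (auto intro!: holomorphic_intros f)
    show "cmod (f w / w ^ Suc k) \<le> B / \<rho> ^ Suc k" if "cmod (w - 0) = \<rho>" for w
      using B[of w] that \<rho> by (auto simp: norm_divide norm_mult norm_power intro!: divide_right_mono)
  qed (use \<rho> \<open>0 \<le> B\<close> in auto)
  then show ?thesis
    unfolding contour_integral_circlepath_laurent_coeff_pos[OF f \<rho>]
    using \<rho> by (simp add: norm_mult field_simps)
qed

lemma norm_laurent_coeff_neg_le:
  assumes f: "f holomorphic_on -{0}" and \<rho>: "0 < \<rho>" and B: "\<And>w. cmod w = \<rho> \<Longrightarrow> cmod (f w) \<le> B"
  shows "cmod (laurent_coeff_neg f k) \<le> B * \<rho> ^ Suc k"
proof -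
  have "0 \<le> B" using B[of "of_real \<rho>"] \<rho> by (smt (verit) norm_ge_zero norm_of_real)
  have "cmod (contour_integral (circlepath 0 \<rho>) (\<lambda>w. f w * w ^ k)) \<le> B * \<rho> ^ k * (2 * pi * \<rho>)"
  proof (rule has_contour_integral_bound_circlepath[OF has_contour_integral_integral])
    show "(\<lambda>w. f w * w ^ k) contour_integrable_on circlepath 0 \<rho>"
      using \<rho> by (intro contour_integrable_circlepath_punctured) (auto intro!: holomorphic_intros f)
    show "cmod (f w * w ^ k) \<le> B * \<rho> ^ k" if "cmod (w - 0) = \<rho>" for w
      using B[of w] that \<rho> by (auto simp: norm_mult norm_power intro!: mult_right_mono)
  qed (use \<rho> \<open>0 \<le> B\<close> in auto)
  then show ?thesis
    unfolding contour_integral_circlepath_laurent_coeff_neg[OF f \<rho>]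
    using \<rho> by (simp add: norm_mult field_simps)
qed

lemma laurent_coeff_pos_add:
  assumes "f holomorphic_on -{0}" "g holomorphic_on -{0}"
  shows "laurent_coeff_pos (f + g) k = laurent_coeff_pos f k + laurent_coeff_pos g k"
proof -
  have "contour_integral (circlepath 0 1) (\<lambda>w. f w / w ^ Suc k + g w / w ^ Suc k)
      = contour_integral (circlepath 0 1) (\<lambda>w. f w / w ^ Suc k)
        + contour_integral (circlepath 0 1) (\<lambda>w. g w / w ^ Suc k)"
    using assms by (intro contour_integral_add contour_integrable_circlepath_punctured)
      (auto intro!: holomorphic_intros)
  then show ?thesis
    by (simp add: laurent_coeff_pos_def add_divide_distrib)
qed

lemma laurent_coeff_neg_add:
  assumes "f holomorphic_on -{0}" "g holomorphic_on -{0}"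
  shows "laurent_coeff_neg (f + g) k = laurent_coeff_neg f k + laurent_coeff_neg g k"
proof -
  have "contour_integral (circlepath 0 1) (\<lambda>w. f w * w ^ k + g w * w ^ k)
      = contour_integral (circlepath 0 1) (\<lambda>w. f w * w ^ k)
        + contour_integral (circlepath 0 1) (\<lambda>w. g w * w ^ k)"
    using assms by (intro contour_integral_add contour_integrable_circlepath_punctured)
      (auto intro!: holomorphic_intros)
  then show ?thesis
    by (simp add: laurent_coeff_neg_def distrib_right add_divide_distrib)
qed

lemma laurent_coeff_pos_scaleR:
  assumes "f holomorphic_on -{0}"
  shows "laurent_coeff_pos (a *\<^sub>R f) k = of_real a * laurent_coeff_pos f k"
proof -
  have "contour_integral (circlepath 0 1) (\<lambda>w. of_real a * (f w / w ^ Suc k))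
      = of_real a * contour_integral (circlepath 0 1) (\<lambda>w. f w / w ^ Suc k)"
    using assms by (intro contour_integral_lmul contour_integrable_circlepath_punctured)
      (auto intro!: holomorphic_intros)
  then show ?thesis
    by (simp add: laurent_coeff_pos_def scaleR_conv_of_real)
qed

lemma laurent_coeff_neg_scaleR:
  assumes "f holomorphic_on -{0}"
  shows "laurent_coeff_neg (a *\<^sub>R f) k = of_real a * laurent_coeff_neg f k"
proof -
  have "contour_integral (circlepath 0 1) (\<lambda>w. of_real a * (f w * w ^ k))
      = of_real a * contour_integral (circlepath 0 1) (\<lambda>w. f w * w ^ k)"
    using assms by (intro contour_integral_lmul contour_integrable_circlepath_punctured)
      (auto intro!: holomorphic_intros)
  then show ?thesis
    by (simp add: laurent_coeff_neg_def scaleR_conv_of_real mult.assoc)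
qed

section \<open>The annuli and the sup norms\<close>

lemma compact_annulus_A: "compact (annulus_A n)"
proof -
  have "annulus_A n = cball 0 (exp (real n)) - ball 0 (exp (- real n))"
    by (auto simp: annulus_A_def)
  then show ?thesis by (simp add: compact_diff)
qed

lemma annulus_A_subset_punctured: "annulus_A n \<subseteq> -{0}"
  by (auto simp: annulus_A_def)

lemma one_in_annulus_A: "1 \<in> annulus_A n"
  by (auto simp: annulus_A_def)

lemma annulus_A_mono: "m \<le> n \<Longrightarrow> annulus_A m \<subseteq> annulus_A n"
  by (auto simp: annulus_A_def) (meson exp_le_cancel_iff neg_le_iff_le of_nat_le_iff order_trans)+

lemma annulus_A_norm_cong: "cmod w = cmod z \<Longrightarrow> z \<in> annulus_A n \<Longrightarrow> w \<in> annulus_A n"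
  by (simp add: annulus_A_def)

lemma cball_subset_annulus_A:
  assumes "z \<noteq> 0"
  obtains n where "cball z (cmod z / 2) \<subseteq> annulus_A n"
proof -
  obtain n :: nat where n: "max (ln (3 * cmod z / 2)) (- ln (cmod z / 2)) < real n"
    using reals_Archimedean2 by blast
  have "w \<in> annulus_A n" if "w \<in> cball z (cmod z / 2)" for w
  proof -
    have "cmod (z - w) \<le> cmod z / 2"
      using that by (simp add: dist_norm)
    then have lo: "cmod z / 2 \<le> cmod w" and hi: "cmod w \<le> 3 * cmod z / 2"
      using norm_triangle_ineq2[of z w] norm_triangle_ineq2[of w z] by (auto simp: norm_minus_commute)
    have "exp (- real n) < cmod z / 2"
      using exp_less_mono[of "- real n" "ln (cmod z / 2)"] n assms by simp
    moreover have "3 * cmod z / 2 < exp (real n)"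
      using exp_less_mono[of "ln (3 * cmod z / 2)" "real n"] n assms by simp
    ultimately show ?thesis
      using lo hi by (simp add: annulus_A_def)
  qed
  then show ?thesis using that by blast
qed

lemma in_some_annulus_A:
  assumes "z \<noteq> 0"
  obtains n where "z \<in> annulus_A n"
  using cball_subset_annulus_A[OF assms] by (metis centre_in_cball subsetD norm_ge_zero zero_le_divide_iff zero_le_numeral)

lemma bdd_above_hol_norm:
  assumes "f holomorphic_on -{0}"
  shows "bdd_above ((\<lambda>z. cmod (f z)) ` annulus_A n)"
proof -
  have "continuous_on (annulus_A n) f"
    using assms annulus_A_subset_punctured holomorphic_on_imp_continuous_on holomorphic_on_subset by blast
  then have "compact (f ` annulus_A n)"
    using compact_annulus_A compact_continuous_image by blast
  then show ?thesis
    by (auto dest!: compact_imp_bounded simp: bounded_iff bdd_above_def)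
qed

lemma norm_le_hol_norm:
  assumes "f holomorphic_on -{0}" and "z \<in> annulus_A n"
  shows "cmod (f z) \<le> hol_norm n f"
  unfolding hol_norm_def by (rule cSUP_upper[OF assms(2) bdd_above_hol_norm[OF assms(1)]])

lemma hol_norm_nonneg: "f holomorphic_on -{0} \<Longrightarrow> 0 \<le> hol_norm n f"
  using norm_le_hol_norm[OF _ one_in_annulus_A] norm_ge_zero order_trans by blast

lemma hol_norm_le:
  assumes "\<And>z. z \<in> annulus_A n \<Longrightarrow> cmod (f z) \<le> M"
  shows "hol_norm n f \<le> M"
  unfolding hol_norm_def using one_in_annulus_A by (intro cSUP_least assms) auto

lemma hol_norm_mono: "f holomorphic_on -{0} \<Longrightarrow> m \<le> n \<Longrightarrow> hol_norm m f \<le> hol_norm n f"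
  by (rule hol_norm_le) (use annulus_A_mono in \<open>blast intro: norm_le_hol_norm\<close>)

lemma hol_norm_triangle:
  assumes "f holomorphic_on -{0}" "g holomorphic_on -{0}"
  shows "hol_norm n (f + g) \<le> hol_norm n f + hol_norm n g"
proof (rule hol_norm_le)
  fix z assume z: "z \<in> annulus_A n"
  have "cmod ((f + g) z) \<le> cmod (f z) + cmod (g z)"
    by (simp add: norm_triangle_ineq)
  also have "\<dots> \<le> hol_norm n f + hol_norm n g"
    using assms z by (intro add_mono norm_le_hol_norm)
  finally show "cmod ((f + g) z) \<le> hol_norm n f + hol_norm n g" .
qed

lemma hol_norm_scaleR:
  assumes f: "f holomorphic_on -{0}"
  shows "hol_norm n (a *\<^sub>R f) = \<bar>a\<bar> * hol_norm n f"
proof (cases "a = 0")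
  case True
  then show ?thesis
    using one_in_annulus_A by (auto simp: hol_norm_def intro!: cSUP_const)
next
  case False
  have "hol_norm n (a *\<^sub>R f) \<le> \<bar>a\<bar> * hol_norm n f"
    by (rule hol_norm_le) (auto intro!: mult_left_mono norm_le_hol_norm[OF f])
  moreover have "hol_norm n f \<le> hol_norm n (a *\<^sub>R f) / \<bar>a\<bar>"
  proof (rule hol_norm_le)
    have fa: "(a *\<^sub>R f) holomorphic_on -{0}"
      using f by (simp add: scaleR_fun_def scaleR_conv_of_real holomorphic_intros)
    fix z assume "z \<in> annulus_A n"
    then show "cmod (f z) \<le> hol_norm n (a *\<^sub>R f) / \<bar>a\<bar>"
      using norm_le_hol_norm[OF fa] False by (simp add: field_simps)
  qed
  ultimately show ?thesis
    using False by (simp add: field_simps)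
qed

lemma norm_laurent_coeff_pos_le_hol_norm:
  assumes "f holomorphic_on -{0}"
  shows "cmod (laurent_coeff_pos f k) \<le> hol_norm n f * exp (- (real n * real k))"
proof -
  have "cmod (laurent_coeff_pos f k) \<le> hol_norm n f / exp (real n) ^ k"
    using assms by (rule norm_laurent_coeff_pos_le) (auto intro!: norm_le_hol_norm[OF assms] simp: annulus_A_def)
  then show ?thesis
    by (simp add: exp_of_nat_mult[symmetric] exp_minus divide_inverse mult.commute)
qed

lemma norm_laurent_coeff_neg_le_hol_norm:
  assumes "f holomorphic_on -{0}"
  shows "cmod (laurent_coeff_neg f k) \<le> hol_norm n f * exp (- (real n * real k))"
proof -
  have "cmod (laurent_coeff_neg f k) \<le> hol_norm n f * exp (- real n) ^ Suc k"
    using assms by (rule norm_laurent_coeff_neg_le) (auto intro!: norm_le_hol_norm[OF assms] simp: annulus_A_def)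
  also have "\<dots> \<le> hol_norm n f * exp (- (real n * real k))"
    using hol_norm_nonneg[OF assms]
    by (intro mult_left_mono) (simp_all add: exp_of_nat_mult[symmetric] algebra_simps)
  finally show ?thesis .
qed

section \<open>\<open>Hol\<^sup>k\<^sup>,\<^sup>l\<close> is a graded Fr\'echet space\<close>

lemma holomorphic_on_uniform_limit_annuli:
  assumes F: "\<And>N. F N holomorphic_on -{0}"
    and lim: "\<And>n. uniform_limit (annulus_A n) F g sequentially"
  shows "g holomorphic_on -{0}"
proof -
  have "\<exists>e>0. g holomorphic_on ball z e" if z: "z \<in> -{0}" for z
  proof -
    define r where "r = cmod z / 2"
    obtain n where n: "cball z r \<subseteq> annulus_A n"
      using cball_subset_annulus_A z unfolding r_def by blast
    then have sub: "cball z r \<subseteq> -{0}"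
      using annulus_A_subset_punctured by blast
    have "\<forall>\<^sub>F N in sequentially. continuous_on (cball z r) (F N) \<and> F N holomorphic_on ball z r"
    proof (intro always_eventually allI conjI)
      fix N
      show "continuous_on (cball z r) (F N)"
        by (rule holomorphic_on_imp_continuous_on[OF holomorphic_on_subset[OF F sub]])
      show "F N holomorphic_on ball z r"
        using holomorphic_on_subset[OF F] sub ball_subset_cball by blast
    qed
    then have "g holomorphic_on ball z r"
      by (rule holomorphic_uniform_limit[OF _ uniform_limit_on_subset[OF lim n]]) auto
    moreover have "r > 0"
      using z by (simp add: r_def)
    ultimately show ?thesis by blast
  qed
  then have "g analytic_on -{0}"
    unfolding analytic_on_def by blast
  then show ?thesis
    by (rule analytic_imp_holomorphic)
qed

definition unit_root :: "nat \<Rightarrow> complex" where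
  "unit_root k = exp (2 * pi * \<i> / of_nat k)"

lemma Hol_kl_iff:
  "f \<in> Hol_kl k l \<longleftrightarrow>
    f holomorphic_on -{0} \<and> f 0 = 0 \<and> (\<forall>z. z \<noteq> 0 \<longrightarrow> f (unit_root k * z) = unit_root k ^ l * f z)"
  by (simp add: Hol_kl_def unit_root_def)

lemma Hol_kl_holomorphic: "f \<in> Hol_kl k l \<Longrightarrow> f holomorphic_on -{0}"
  by (simp add: Hol_kl_iff)

lemma lin_subspace_Hol_kl: "lin_subspace (Hol_kl k l)"
  unfolding lin_subspace_def
proof (intro conjI ballI allI)
  show "0 \<in> Hol_kl k l"
    by (simp add: Hol_kl_iff zero_fun_def)
  show "f + g \<in> Hol_kl k l" if "f \<in> Hol_kl k l" "g \<in> Hol_kl k l" for f g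
    using that by (auto simp: Hol_kl_iff plus_fun_def holomorphic_intros algebra_simps)
  show "a *\<^sub>R f \<in> Hol_kl k l" if "f \<in> Hol_kl k l" for a f
    using that by (auto simp: Hol_kl_iff scaleR_fun_def scaleR_conv_of_real holomorphic_intros)
qed

lemma seminorm_on_hol_norm: "seminorm_on (Hol_kl k l) (hol_norm n)"
  by (simp add: seminorm_on_def Hol_kl_holomorphic hol_norm_nonneg hol_norm_triangle hol_norm_scaleR)

lemma uniform_limit_if_hol_norm_Cauchy:
  assumes X: "\<And>i. X i holomorphic_on -{0}"
    and Cauchy: "\<And>e. e > 0 \<Longrightarrow> \<exists>M. \<forall>i\<ge>M. \<forall>j\<ge>M. hol_norm n (X i - X j) < e"
  shows "uniform_limit (annulus_A n) X (\<lambda>z. lim (\<lambda>i. X i z)) sequentially"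
proof -
  have "uniformly_Cauchy_on (annulus_A n) X"
  proof (rule uniformly_Cauchy_onI)
    fix e :: real assume "e > 0"
    then obtain M where M: "\<forall>i\<ge>M. \<forall>j\<ge>M. hol_norm n (X i - X j) < e"
      using Cauchy by blast
    have "dist (X i z) (X j z) < e" if "z \<in> annulus_A n" "i \<ge> M" "j \<ge> M" for z i j
    proof -
      have "(X i - X j) holomorphic_on -{0}"
        by (simp add: fun_diff_def holomorphic_on_diff X)
      then have "cmod (X i z - X j z) \<le> hol_norm n (X i - X j)"
        using norm_le_hol_norm[of "X i - X j" z n] that(1) by simp
      also have "\<dots> < e"
        using M that(2,3) by blast
      finally show ?thesis
        by (simp add: dist_norm)
    qed
    then show "\<exists>M. \<forall>z\<in>annulus_A n. \<forall>i\<ge>M. \<forall>j\<ge>M. dist (X i z) (X j z) < e"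
      by meson
  qed
  then show ?thesis
    using Cauchy_uniformly_convergent unfolding uniformly_convergent_uniform_limit_iff by blast
qed

lemma complete_Hol_kl:
  fixes X :: "nat \<Rightarrow> complex \<Rightarrow> complex"
  assumes X: "\<And>i. X i \<in> Hol_kl k l"
    and Cauchy: "\<And>n e. e > 0 \<Longrightarrow> \<exists>M. \<forall>i\<ge>M. \<forall>j\<ge>M. hol_norm n (X i - X j) < e"
  shows "\<exists>f\<in>Hol_kl k l. \<forall>n. \<forall>e>0. \<exists>M. \<forall>i\<ge>M. hol_norm n (X i - f) < e"
proof
  define f where "f z = lim (\<lambda>i. X i z)" for z
  have lim: "uniform_limit (annulus_A n) X f sequentially" for n
    unfolding f_def[abs_def] using X Cauchy by (intro uniform_limit_if_hol_norm_Cauchy Hol_kl_holomorphic)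
  have conv: "(\<lambda>i. X i z) \<longlonglongrightarrow> f z" if z: "z \<noteq> 0" for z
  proof -
    obtain n where "z \<in> annulus_A n"
      using in_some_annulus_A[OF z] .
    then show ?thesis
      by (rule tendsto_uniform_limitI[OF lim])
  qed
  show "f \<in> Hol_kl k l"
    unfolding Hol_kl_iff
  proof (intro conjI allI impI)
    show "f holomorphic_on -{0}"
      using X by (intro holomorphic_on_uniform_limit_annuli[OF _ lim] Hol_kl_holomorphic)
    have "X i 0 = 0" for i
      using X by (simp add: Hol_kl_iff)
    then show "f 0 = 0"
      by (simp add: f_def)
    fix z :: complex assume "z \<noteq> 0"
    have "X i (unit_root k * z) = unit_root k ^ l * X i z" for i
      using X[of i] \<open>z \<noteq> 0\<close> by (simp add: Hol_kl_iff)
    then have "(\<lambda>i. X i (unit_root k * z)) \<longlonglongrightarrow> unit_root k ^ l * f z"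
      using tendsto_mult_left[OF conv[OF \<open>z \<noteq> 0\<close>]] by simp
    moreover have "unit_root k * z \<noteq> 0"
      using \<open>z \<noteq> 0\<close> by (simp add: unit_root_def)
    ultimately show "f (unit_root k * z) = unit_root k ^ l * f z"
      using conv LIMSEQ_unique by blast
  qed
  show "\<forall>n. \<forall>e>0. \<exists>M. \<forall>i\<ge>M. hol_norm n (X i - f) < e"
  proof (intro allI impI)
    fix n and e :: real assume "e > 0"
    then obtain M where M: "\<And>i z. i \<ge> M \<Longrightarrow> z \<in> annulus_A n \<Longrightarrow> dist (X i z) (f z) < e / 2"
      using lim[of n] unfolding uniform_limit_sequentially_iff by (metis half_gt_zero)
    have "hol_norm n (X i - f) \<le> e / 2" if "i \<ge> M" for i
      using M[OF that] by (intro hol_norm_le) (simp add: dist_norm less_imp_le)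
    moreover have "e / 2 < e"
      using \<open>e > 0\<close> by simp
    ultimately show "\<exists>M. \<forall>i\<ge>M. hol_norm n (X i - f) < e"
      by (meson le_less_trans)
  qed
qed

lemma graded_frechet_Hol_kl: "graded_frechet (Hol_kl k l) hol_norm"
  unfolding graded_frechet_def
proof (intro conjI allI ballI impI)
  show "hol_norm n f \<le> hol_norm (Suc n) f" if "f \<in> Hol_kl k l" for n f
    using that by (intro hol_norm_mono Hol_kl_holomorphic) auto
  show "f = 0" if f: "f \<in> Hol_kl k l" and zero: "\<forall>n. hol_norm n f = 0" for f
  proof
    fix z
    show "f z = 0 z"
    proof (cases "z = 0")
      case False
      then obtain n where "z \<in> annulus_A n"
        by (rule in_some_annulus_A)
      then have "cmod (f z) \<le> 0"
        using norm_le_hol_norm[OF Hol_kl_holomorphic[OF f]] zero by metis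
      then show ?thesis by simp
    qed (use f in \<open>simp add: Hol_kl_iff\<close>)
  qed
next
  fix X :: "nat \<Rightarrow> complex \<Rightarrow> complex"
  assume "(\<forall>m. X m \<in> Hol_kl k l) \<and> (\<forall>n. \<forall>e>0. \<exists>M. \<forall>i\<ge>M. \<forall>j\<ge>M. hol_norm n (X i - X j) < e)"
  then show "\<exists>f\<in>Hol_kl k l. \<forall>n. \<forall>e>0. \<exists>M. \<forall>i\<ge>M. hol_norm n (X i - f) < e"
    by (intro complete_Hol_kl) auto
qed (use lin_subspace_Hol_kl seminorm_on_hol_norm in auto)

section \<open>The Banach space \<open>\<complex>\<^sup>2\<close> in coordinates\<close>

definition coord_space :: "nat \<Rightarrow> (nat \<Rightarrow> real) set" where
  "coord_space d = {v. \<forall>i\<ge>d. v i = 0}"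

definition coord_norm :: "nat \<Rightarrow> (nat \<Rightarrow> real) \<Rightarrow> real" where
  "coord_norm d v = (\<Sum>i<d. \<bar>v i\<bar>)"

lemma abs_le_coord_norm: "i < d \<Longrightarrow> \<bar>v i\<bar> \<le> coord_norm d v"
  unfolding coord_norm_def by (rule member_le_sum) auto

lemma banach_on_coord_space: "banach_on (coord_space d) (coord_norm d)"
  unfolding banach_on_def
proof (intro conjI allI impI ballI)
  show "lin_subspace (coord_space d)"
    by (auto simp: lin_subspace_def coord_space_def)
  have "coord_norm d (x + y) \<le> coord_norm d x + coord_norm d y" for x y
    unfolding coord_norm_def sum.distrib[symmetric] by (intro sum_mono) (simp add: abs_triangle_ineq)
  then show "seminorm_on (coord_space d) (coord_norm d)"
    by (simp add: seminorm_on_def coord_norm_def abs_mult sum_distrib_left sum_nonneg)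
  show "x = 0" if x: "x \<in> coord_space d" and "coord_norm d x = 0" for x
  proof
    fix i
    show "x i = 0 i"
      using abs_le_coord_norm[of i d x] \<open>coord_norm d x = 0\<close> x
      by (cases "i < d") (auto simp: coord_space_def)
  qed
next
  fix X :: "nat \<Rightarrow> nat \<Rightarrow> real"
  assume "(\<forall>m. X m \<in> coord_space d) \<and> (\<forall>e>0. \<exists>M. \<forall>m\<ge>M. \<forall>n\<ge>M. coord_norm d (X m - X n) < e)"
  then have Cauchy: "\<And>e. e > 0 \<Longrightarrow> \<exists>M. \<forall>m\<ge>M. \<forall>n\<ge>M. coord_norm d (X m - X n) < e"
    by auto
  define x where "x i = (if i < d then lim (\<lambda>m. X m i) else 0)" for i
  have "(\<lambda>m. X m i) \<longlonglongrightarrow> x i" if i: "i < d" for i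
  proof -
    have "\<bar>X m i - X n i\<bar> \<le> coord_norm d (X m - X n)" for m n
      using abs_le_coord_norm[OF i, of "X m - X n"] by simp
    then have "Cauchy (\<lambda>m. X m i)"
      unfolding Cauchy_def dist_real_def using Cauchy by (meson order_le_less_trans)
    then show ?thesis
      using i by (simp add: x_def Cauchy_convergent_iff convergent_LIMSEQ_iff)
  qed
  then have "(\<lambda>m. \<Sum>i<d. \<bar>X m i - x i\<bar>) \<longlonglongrightarrow> (\<Sum>i<d. \<bar>x i - x i\<bar>)"
    by (intro tendsto_sum tendsto_rabs tendsto_diff tendsto_const) auto
  then have "(\<lambda>m. coord_norm d (X m - x)) \<longlonglongrightarrow> 0"
    by (simp add: coord_norm_def)
  then have "\<forall>e>0. \<exists>M. \<forall>n\<ge>M. coord_norm d (X n - x) < e"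
    unfolding LIMSEQ_iff by (simp add: coord_norm_def)
  moreover have "x \<in> coord_space d"
    by (simp add: coord_space_def x_def)
  ultimately show "\<exists>x\<in>coord_space d. \<forall>e>0. \<exists>M. \<forall>n\<ge>M. coord_norm d (X n - x) < e"
    by blast
qed

text \<open>The Banach space of the theorem is \<open>\<complex>\<^sup>2\<close>, realised as \<open>coord_space 4\<close>.\<close>

definition coords_of_pair :: "complex \<Rightarrow> complex \<Rightarrow> nat \<Rightarrow> real" where
  "coords_of_pair c d i =
     (if i = 0 then Re c else if i = 1 then Im c else if i = 2 then Re d else if i = 3 then Im d else 0)"

definition fst_of_coords :: "(nat \<Rightarrow> real) \<Rightarrow> complex" where
  "fst_of_coords v = Complex (v 0) (v 1)"

definition snd_of_coords :: "(nat \<Rightarrow> real) \<Rightarrow> complex" where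
  "snd_of_coords v = Complex (v 2) (v 3)"

lemma coord_norm_4: "coord_norm 4 v = \<bar>v 0\<bar> + \<bar>v 1\<bar> + \<bar>v 2\<bar> + \<bar>v 3\<bar>"
  by (simp add: coord_norm_def numeral_eq_Suc)

lemma coords_of_pair_in_coord_space: "coords_of_pair c d \<in> coord_space 4"
  by (simp add: coords_of_pair_def coord_space_def)

lemma fst_of_coords_of_pair [simp]: "fst_of_coords (coords_of_pair c d) = c"
  by (simp add: fst_of_coords_def coords_of_pair_def)

lemma snd_of_coords_of_pair [simp]: "snd_of_coords (coords_of_pair c d) = d"
  by (simp add: snd_of_coords_def coords_of_pair_def)

lemma coord_norm_coords_of_pair_le: "coord_norm 4 (coords_of_pair c d) \<le> 2 * cmod c + 2 * cmod d"
  using abs_Re_le_cmod[of c] abs_Im_le_cmod[of c] abs_Re_le_cmod[of d] abs_Im_le_cmod[of d]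
  by (simp add: coord_norm_4 coords_of_pair_def)

lemma norm_fst_snd_of_coords_le: "cmod (fst_of_coords v) + cmod (snd_of_coords v) \<le> coord_norm 4 v"
  using cmod_le[of "fst_of_coords v"] cmod_le[of "snd_of_coords v"]
  by (simp add: fst_of_coords_def snd_of_coords_def coord_norm_4)

lemma coords_of_pair_add: "coords_of_pair (a + b) (c + d) = coords_of_pair a c + coords_of_pair b d"
  by (auto simp: coords_of_pair_def)

lemma coords_of_pair_scaleR: "coords_of_pair (of_real r * a) (of_real r * c) = r *\<^sub>R coords_of_pair a c"
  by (auto simp: coords_of_pair_def)

lemma fst_of_coords_add: "fst_of_coords (v + w) = fst_of_coords v + fst_of_coords w"
  by (simp add: fst_of_coords_def complex_eq_iff)

lemma snd_of_coords_add: "snd_of_coords (v + w) = snd_of_coords v + snd_of_coords w"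
  by (simp add: snd_of_coords_def complex_eq_iff)

lemma fst_of_coords_scaleR: "fst_of_coords (r *\<^sub>R v) = of_real r * fst_of_coords v"
  by (simp add: fst_of_coords_def complex_eq_iff)

lemma snd_of_coords_scaleR: "snd_of_coords (r *\<^sub>R v) = of_real r * snd_of_coords v"
  by (simp add: snd_of_coords_def complex_eq_iff)

section \<open>The tame embedding by Laurent coefficients\<close>

definition laurent_coeffs :: "(complex \<Rightarrow> complex) \<Rightarrow> nat \<Rightarrow> nat \<Rightarrow> real" where
  "laurent_coeffs f k = coords_of_pair (laurent_coeff_pos f k) (laurent_coeff_neg f k)"

lemma summable_exp_minus_nat: "summable (\<lambda>k::nat. exp (- real k))"
  using summable_geometric[of "exp (- 1) :: real"] by (simp add: exp_of_nat_mult[symmetric])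

lemma weighted_coord_norm_laurent_coeffs_le:
  assumes f: "f holomorphic_on -{0}"
  shows "exp (real n * real k) * coord_norm 4 (laurent_coeffs f k) \<le> 4 * hol_norm (Suc n) f * exp (- real k)"
proof -
  have "coord_norm 4 (laurent_coeffs f k) \<le> 4 * hol_norm (Suc n) f * exp (- (real (Suc n) * real k))"
    using coord_norm_coords_of_pair_le[of "laurent_coeff_pos f k" "laurent_coeff_neg f k"]
      norm_laurent_coeff_pos_le_hol_norm[OF f, of k "Suc n"]
      norm_laurent_coeff_neg_le_hol_norm[OF f, of k "Suc n"]
    by (simp add: laurent_coeffs_def)
  then have "exp (real n * real k) * coord_norm 4 (laurent_coeffs f k)
      \<le> 4 * hol_norm (Suc n) f * (exp (real n * real k) * exp (- (real (Suc n) * real k)))"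
    by (simp add: mult_left_mono mult_ac)
  also have "exp (real n * real k) * exp (- (real (Suc n) * real k)) = exp (- real k)"
    by (simp add: exp_add[symmetric] algebra_simps)
  finally show ?thesis .
qed

lemma summable_weighted_laurent_coeffs:
  assumes f: "f holomorphic_on -{0}"
  shows "summable (\<lambda>k. exp (real n * real k) * coord_norm 4 (laurent_coeffs f k))"
proof (rule summable_comparison_test'[of _ 0])
  show "summable (\<lambda>k. 4 * hol_norm (Suc n) f * exp (- real k))"
    by (intro summable_mult summable_exp_minus_nat)
  show "norm (exp (real n * real k) * coord_norm 4 (laurent_coeffs f k)) \<le> 4 * hol_norm (Suc n) f * exp (- real k)"
    for k
    using weighted_coord_norm_laurent_coeffs_le[OF f, of n k] by (simp add: abs_mult coord_norm_def)
qed

lemma Sigma_norm_laurent_coeffs_le: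
  assumes f: "f holomorphic_on -{0}"
  shows "Sigma_norm (coord_norm 4) n (laurent_coeffs f) \<le> 4 * (\<Sum>k. exp (- real k)) * hol_norm (Suc n) f"
proof -
  have "Sigma_norm (coord_norm 4) n (laurent_coeffs f) \<le> (\<Sum>k. 4 * hol_norm (Suc n) f * exp (- real k))"
    unfolding Sigma_norm_def
    by (intro suminf_le summable_weighted_laurent_coeffs[OF f] summable_mult summable_exp_minus_nat
        weighted_coord_norm_laurent_coeffs_le[OF f])
  also have "\<dots> = 4 * hol_norm (Suc n) f * (\<Sum>k. exp (- real k))"
    by (rule suminf_mult[OF summable_exp_minus_nat])
  finally show ?thesis
    by (simp add: mult_ac)
qed

lemma tame_map_laurent_coeffs:
  "tame_map (Hol_kl k l) hol_norm (Sigma_space (coord_space 4) (coord_norm 4)) (Sigma_norm (coord_norm 4))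
    laurent_coeffs"
  unfolding tame_map_def
proof (intro conjI ballI allI)
  fix f assume "f \<in> Hol_kl k l"
  then show "laurent_coeffs f \<in> Sigma_space (coord_space 4) (coord_norm 4)"
    unfolding Sigma_space_def
    using summable_weighted_laurent_coeffs[OF Hol_kl_holomorphic]
    by (simp add: laurent_coeffs_def coords_of_pair_in_coord_space)
next
  fix f g assume "f \<in> Hol_kl k l" "g \<in> Hol_kl k l"
  then show "laurent_coeffs (f + g) = laurent_coeffs f + laurent_coeffs g"
    by (simp add: laurent_coeffs_def fun_eq_iff laurent_coeff_pos_add laurent_coeff_neg_add
        Hol_kl_holomorphic coords_of_pair_add[unfolded fun_eq_iff])
next
  fix a :: real and f assume "f \<in> Hol_kl k l"
  then show "laurent_coeffs (a *\<^sub>R f) = a *\<^sub>R laurent_coeffs f"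
    by (simp add: laurent_coeffs_def fun_eq_iff laurent_coeff_pos_scaleR laurent_coeff_neg_scaleR
        Hol_kl_holomorphic coords_of_pair_scaleR[unfolded fun_eq_iff])
next
  have "Sigma_norm (coord_norm 4) n (laurent_coeffs f) \<le> 4 * (\<Sum>k. exp (- real k)) * hol_norm (n + 1) f"
    if "f \<in> Hol_kl k l" for n f
    using Sigma_norm_laurent_coeffs_le[OF Hol_kl_holomorphic[OF that]] by simp
  then show "\<exists>r b. \<exists>C::nat \<Rightarrow> real. \<forall>n\<ge>b. \<forall>f\<in>Hol_kl k l.
      Sigma_norm (coord_norm 4) n (laurent_coeffs f) \<le> C n * hol_norm (n + r) f"
    by (intro exI[of _ 1] exI[of _ 0] exI[of _ "\<lambda>_. 4 * (\<Sum>k. exp (- real k))"]) blast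
qed

section \<open>Laurent series with coefficients in \<open>\<Sigma>(\<complex>\<^sup>2)\<close>\<close>

definition laurent_term :: "(nat \<Rightarrow> nat \<Rightarrow> real) \<Rightarrow> nat \<Rightarrow> complex \<Rightarrow> complex" where
  "laurent_term s j w = fst_of_coords (s j) * w ^ j + snd_of_coords (s j) / w ^ Suc j"

definition laurent_sum :: "(nat \<Rightarrow> nat \<Rightarrow> real) \<Rightarrow> complex \<Rightarrow> complex" where
  "laurent_sum s w = (\<Sum>j. laurent_term s j w)"

lemma norm_laurent_term_le:
  assumes w: "w \<in> annulus_A n"
  shows "cmod (laurent_term s j w) \<le> exp (real n) * (exp (real n * real j) * coord_norm 4 (s j))"
proof -
  let ?E = "exp (real n) ^ Suc j"
  have "w \<noteq> 0" and lo: "exp (- real n) \<le> cmod w" and hi: "cmod w \<le> exp (real n)"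
    using w by (auto simp: annulus_A_def)
  have "1 / cmod w \<le> exp (real n)"
    using lo \<open>w \<noteq> 0\<close> by (simp add: divide_simps exp_minus) (metis exp_gt_zero mult.commute pos_divide_le_eq)
  then have "(1 / cmod w) ^ Suc j \<le> ?E"
    by (rule power_mono) simp
  then have "cmod (1 / w ^ Suc j) \<le> ?E"
    by (simp add: norm_divide norm_power power_one_over del: power_Suc)
  then have neg: "cmod (snd_of_coords (s j) / w ^ Suc j) \<le> cmod (snd_of_coords (s j)) * ?E"
    using mult_left_mono[OF _ norm_ge_zero] by (metis norm_mult times_divide_eq_right mult_1_right)
  have "cmod (w ^ j) \<le> exp (real n) ^ j"
    using hi by (simp add: norm_power power_mono)
  also have "\<dots> \<le> ?E"
    by (simp add: power_increasing)
  finally have pos: "cmod (fst_of_coords (s j) * w ^ j) \<le> cmod (fst_of_coords (s j)) * ?E"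
    unfolding norm_mult by (rule mult_left_mono) simp
  have "cmod (laurent_term s j w) \<le> cmod (fst_of_coords (s j)) * ?E + cmod (snd_of_coords (s j)) * ?E"
    unfolding laurent_term_def using norm_triangle_ineq pos neg by (rule order_trans[OF _ add_mono])
  also have "\<dots> \<le> coord_norm 4 (s j) * ?E"
    using norm_fst_snd_of_coords_le[of "s j"] by (simp add: distrib_right[symmetric] mult_right_mono del: power_Suc)
  also have "?E = exp (real n) * exp (real n * real j)"
    by (simp add: exp_of_nat_mult[symmetric] mult.commute)
  finally show ?thesis
    by (simp add: mult_ac)
qed

lemma summable_norm_laurent_term:
  assumes s: "s \<in> Sigma_space V (coord_norm 4)" and w: "w \<noteq> 0"
  shows "summable (\<lambda>j. cmod (laurent_term s j w))"
proof -
  obtain n where n: "w \<in> annulus_A n"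
    using in_some_annulus_A[OF w] .
  have "summable (\<lambda>j. exp (real n) * (exp (real n * real j) * coord_norm 4 (s j)))"
    using s by (intro summable_mult) (simp add: Sigma_space_def)
  then show ?thesis
    by (rule summable_comparison_test'[of _ 0]) (simp add: norm_laurent_term_le[OF n])
qed

lemma norm_laurent_sum_le:
  assumes s: "s \<in> Sigma_space V (coord_norm 4)" and w: "w \<in> annulus_A n"
  shows "cmod (laurent_sum s w) \<le> exp (real n) * Sigma_norm (coord_norm 4) n s"
proof -
  have w0: "w \<noteq> 0"
    using w annulus_A_subset_punctured by blast
  have sm: "summable (\<lambda>j. exp (real n * real j) * coord_norm 4 (s j))"
    using s by (simp add: Sigma_space_def)
  have "cmod (laurent_sum s w) \<le> (\<Sum>j. cmod (laurent_term s j w))"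
    unfolding laurent_sum_def by (rule summable_norm[OF summable_norm_laurent_term[OF s w0]])
  also have "\<dots> \<le> (\<Sum>j. exp (real n) * (exp (real n * real j) * coord_norm 4 (s j)))"
    using norm_laurent_term_le[OF w] summable_norm_laurent_term[OF s w0] summable_mult[OF sm]
    by (intro suminf_le) auto
  also have "\<dots> = exp (real n) * Sigma_norm (coord_norm 4) n s"
    unfolding Sigma_norm_def by (rule suminf_mult[OF sm])
  finally show ?thesis .
qed

lemma laurent_sum_holomorphic:
  assumes s: "s \<in> Sigma_space V (coord_norm 4)"
  shows "laurent_sum s holomorphic_on -{0}"
proof (rule holomorphic_on_uniform_limit_annuli)
  show "(\<lambda>w. \<Sum>j<N. laurent_term s j w) holomorphic_on -{0}" for N
    unfolding laurent_term_def by (intro holomorphic_on_sum) (auto intro!: holomorphic_intros)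
  show "uniform_limit (annulus_A n) (\<lambda>N w. \<Sum>j<N. laurent_term s j w) (laurent_sum s) sequentially" for n
    unfolding laurent_sum_def[abs_def] using s
    by (intro Weierstrass_m_test[where M = "\<lambda>j. exp (real n) * (exp (real n * real j) * coord_norm 4 (s j))"])
      (auto intro: norm_laurent_term_le summable_mult simp: Sigma_space_def)
qed

lemma laurent_sum_add:
  assumes "s \<in> Sigma_space V (coord_norm 4)" "t \<in> Sigma_space V (coord_norm 4)" and "w \<noteq> 0"
  shows "laurent_sum (s + t) w = laurent_sum s w + laurent_sum t w"
proof -
  have "laurent_term (s + t) j w = laurent_term s j w + laurent_term t j w" for j
    by (simp add: laurent_term_def fst_of_coords_add snd_of_coords_add algebra_simps add_divide_distrib)
  then show ?thesis
    using assms unfolding laurent_sum_def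
    by (simp add: suminf_add summable_norm_cancel summable_norm_laurent_term)
qed

lemma laurent_sum_scaleR:
  assumes "s \<in> Sigma_space V (coord_norm 4)" and "w \<noteq> 0"
  shows "laurent_sum (a *\<^sub>R s) w = of_real a * laurent_sum s w"
proof -
  have "laurent_term (a *\<^sub>R s) j w = of_real a * laurent_term s j w" for j
    by (simp add: laurent_term_def fst_of_coords_scaleR snd_of_coords_scaleR algebra_simps)
  then show ?thesis
    using assms unfolding laurent_sum_def
    by (simp add: suminf_mult summable_norm_cancel summable_norm_laurent_term)
qed

section \<open>Averaging over the rotations by \<open>k\<close>-th roots of unity\<close>

lemma norm_unit_root [simp]: "cmod (unit_root k) = 1"
  by (simp add: unit_root_def)

lemma unit_root_nonzero [simp]: "unit_root k \<noteq> 0"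
  by (simp add: unit_root_def)

lemma unit_root_pow_self: "k \<ge> 1 \<Longrightarrow> unit_root k ^ k = 1"
  by (simp add: unit_root_def exp_of_nat_mult[symmetric])

lemma Hol_kl_unit_root_power:
  assumes f: "f \<in> Hol_kl k l" and z: "z \<noteq> 0"
  shows "f (unit_root k ^ m * z) = unit_root k ^ (l * m) * f z"
proof (induction m)
  case (Suc m)
  have "f (unit_root k ^ Suc m * z) = f (unit_root k * (unit_root k ^ m * z))"
    by (simp add: mult.assoc)
  also have "\<dots> = unit_root k ^ l * f (unit_root k ^ m * z)"
    using f z by (simp add: Hol_kl_iff)
  finally show ?case
    using Suc by (simp add: power_add)
qed simp

definition rotation_average :: "nat \<Rightarrow> nat \<Rightarrow> (complex \<Rightarrow> complex) \<Rightarrow> complex \<Rightarrow> complex" where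
  "rotation_average k l g z = (\<Sum>m<k. g (unit_root k ^ m * z) / unit_root k ^ (l * m)) / of_nat k"

lemma rotation_average_cong:
  assumes "\<And>w. w \<noteq> 0 \<Longrightarrow> g w = h w" and "z \<noteq> 0"
  shows "rotation_average k l g z = rotation_average k l h z"
  unfolding rotation_average_def using assms by (intro arg_cong2[where f = "(/)"] sum.cong) auto

lemma rotation_average_add:
  "rotation_average k l (\<lambda>w. g w + h w) z = rotation_average k l g z + rotation_average k l h z"
  unfolding rotation_average_def by (simp add: sum.distrib add_divide_distrib)

lemma rotation_average_mult:
  "rotation_average k l (\<lambda>w. c * g w) z = c * rotation_average k l g z"
  unfolding rotation_average_def by (simp add: sum_distrib_left mult.assoc)

lemma rotation_average_holomorphic:
  assumes g: "g holomorphic_on -{0}"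
  shows "rotation_average k l g holomorphic_on -{0}"
proof -
  have "(\<lambda>z. g (unit_root k ^ m * z)) holomorphic_on -{0}" for m
    by (rule holomorphic_on_compose_gen[OF _ g, unfolded o_def]) (auto intro!: holomorphic_intros)
  then show ?thesis
    unfolding rotation_average_def[abs_def] by (intro holomorphic_intros holomorphic_on_sum) auto
qed

lemma sum_lessThan_Suc_cyclic:
  fixes G :: "nat \<Rightarrow> 'a::comm_monoid_add"
  assumes "G k = G 0"
  shows "(\<Sum>m<k. G (Suc m)) = (\<Sum>m<k. G m)"
proof (cases k)
  case (Suc n)
  then have "(\<Sum>m<k. G (Suc m)) = G 0 + (\<Sum>m<n. G (Suc m))"
    using assms by (simp add: add.commute)
  also have "\<dots> = (\<Sum>m<k. G m)"
    unfolding Suc sum.lessThan_Suc_shift ..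
  finally show ?thesis .
qed simp

text \<open>Rotating \<open>z\<close> by \<open>\<omega>\<close> shifts the summation index cyclically, since \<open>\<omega>\<^sup>k = 1\<close>.\<close>

lemma rotation_average_unit_root:
  assumes k: "k \<ge> 1"
  shows "rotation_average k l g (unit_root k * z) = unit_root k ^ l * rotation_average k l g z"
proof -
  define \<omega> where "\<omega> = unit_root k"
  define G where "G m = g (\<omega> ^ m * z) / \<omega> ^ (l * m)" for m
  have "G k = G 0"
    using unit_root_pow_self[OF k] by (simp add: G_def \<omega>_def power_mult mult.commute[of l k] power_mult[symmetric])
  have "g (\<omega> ^ m * (\<omega> * z)) / \<omega> ^ (l * m) = \<omega> ^ l * G (Suc m)" for m
    by (simp add: G_def \<omega>_def power_add algebra_simps)
  then have "(\<Sum>m<k. g (\<omega> ^ m * (\<omega> * z)) / \<omega> ^ (l * m)) = \<omega> ^ l * (\<Sum>m<k. G m)"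
    by (simp add: sum_distrib_left[symmetric] sum_lessThan_Suc_cyclic[OF \<open>G k = G 0\<close>])
  then show ?thesis
    unfolding rotation_average_def \<omega>_def[symmetric] G_def by (simp add: mult.assoc)
qed

lemma rotation_average_Hol_kl:
  assumes k: "k \<ge> 1" and f: "f \<in> Hol_kl k l" and z: "z \<noteq> 0"
  shows "rotation_average k l f z = f z"
proof -
  have "(\<Sum>m<k. f (unit_root k ^ m * z) / unit_root k ^ (l * m)) = (\<Sum>m<k. f z)"
    by (rule sum.cong) (simp_all add: Hol_kl_unit_root_power[OF f z])
  then show ?thesis
    using k by (simp add: rotation_average_def)
qed

lemma norm_rotation_average_le:
  assumes k: "k \<ge> 1" and z: "z \<in> annulus_A n"
    and B: "\<And>w. w \<in> annulus_A n \<Longrightarrow> cmod (g w) \<le> B"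
  shows "cmod (rotation_average k l g z) \<le> B"
proof -
  have "unit_root k ^ m * z \<in> annulus_A n" for m
    using z by (rule annulus_A_norm_cong[rotated]) (simp add: norm_mult norm_power)
  then have "cmod (\<Sum>m<k. g (unit_root k ^ m * z) / unit_root k ^ (l * m)) \<le> (\<Sum>m<k. B)"
    using B by (intro order_trans[OF norm_sum] sum_mono) (simp add: norm_divide norm_power)
  then show ?thesis
    using k by (simp add: rotation_average_def norm_divide divide_simps mult.commute)
qed

section \<open>The tame left inverse\<close>

definition laurent_synthesis :: "nat \<Rightarrow> nat \<Rightarrow> (nat \<Rightarrow> nat \<Rightarrow> real) \<Rightarrow> complex \<Rightarrow> complex" where
  "laurent_synthesis k l s z = (if z = 0 then 0 else rotation_average k l (laurent_sum s) z)"

lemma laurent_synthesis_in_Hol_kl: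
  assumes k: "k \<ge> 1" and s: "s \<in> Sigma_space V (coord_norm 4)"
  shows "laurent_synthesis k l s \<in> Hol_kl k l"
  unfolding Hol_kl_iff
proof (intro conjI allI impI)
  show "laurent_synthesis k l s holomorphic_on -{0}"
    by (rule holomorphic_transform[OF rotation_average_holomorphic[OF laurent_sum_holomorphic[OF s]]])
      (simp add: laurent_synthesis_def)
  show "laurent_synthesis k l s 0 = 0"
    by (simp add: laurent_synthesis_def)
  show "laurent_synthesis k l s (unit_root k * z) = unit_root k ^ l * laurent_synthesis k l s z"
    if "z \<noteq> 0" for z
    using that by (simp add: laurent_synthesis_def rotation_average_unit_root[OF k])
qed

lemma hol_norm_laurent_synthesis_le:
  assumes k: "k \<ge> 1" and s: "s \<in> Sigma_space V (coord_norm 4)"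
  shows "hol_norm n (laurent_synthesis k l s) \<le> exp (real n) * Sigma_norm (coord_norm 4) n s"
proof (rule hol_norm_le)
  fix z assume z: "z \<in> annulus_A n"
  then have "laurent_synthesis k l s z = rotation_average k l (laurent_sum s) z"
    using annulus_A_subset_punctured by (auto simp: laurent_synthesis_def)
  also have "cmod \<dots> \<le> exp (real n) * Sigma_norm (coord_norm 4) n s"
    by (rule norm_rotation_average_le[OF k z norm_laurent_sum_le[OF s]])
  finally show "cmod (laurent_synthesis k l s z) \<le> exp (real n) * Sigma_norm (coord_norm 4) n s" .
qed

lemma tame_map_laurent_synthesis:
  assumes k: "k \<ge> 1"
  shows "tame_map (Sigma_space (coord_space 4) (coord_norm 4)) (Sigma_norm (coord_norm 4)) (Hol_kl k l) hol_norm
    (laurent_synthesis k l)"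
  unfolding tame_map_def
proof (intro conjI ballI allI)
  fix s assume "s \<in> Sigma_space (coord_space 4) (coord_norm 4)"
  then show "laurent_synthesis k l s \<in> Hol_kl k l"
    by (rule laurent_synthesis_in_Hol_kl[OF k])
next
  fix s t assume "s \<in> Sigma_space (coord_space 4) (coord_norm 4)" "t \<in> Sigma_space (coord_space 4) (coord_norm 4)"
  then show "laurent_synthesis k l (s + t) = laurent_synthesis k l s + laurent_synthesis k l t"
    by (auto simp: fun_eq_iff laurent_synthesis_def laurent_sum_add rotation_average_add
        cong: rotation_average_cong)
next
  fix a :: real and s assume "s \<in> Sigma_space (coord_space 4) (coord_norm 4)"
  then show "laurent_synthesis k l (a *\<^sub>R s) = a *\<^sub>R laurent_synthesis k l s"
    by (auto simp: fun_eq_iff laurent_synthesis_def laurent_sum_scaleR rotation_average_mult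
        scaleR_conv_of_real cong: rotation_average_cong)
next
  show "\<exists>r b. \<exists>C::nat \<Rightarrow> real. \<forall>n\<ge>b. \<forall>s\<in>Sigma_space (coord_space 4) (coord_norm 4).
      hol_norm n (laurent_synthesis k l s) \<le> C n * Sigma_norm (coord_norm 4) (n + r) s"
    using hol_norm_laurent_synthesis_le[OF k]
    by (intro exI[of _ 0] exI[of _ 0] exI[of _ "\<lambda>n. exp (real n)"]) simp
qed

lemma laurent_synthesis_laurent_coeffs:
  assumes k: "k \<ge> 1" and f: "f \<in> Hol_kl k l"
  shows "laurent_synthesis k l (laurent_coeffs f) = f"
proof
  fix z
  have "laurent_sum (laurent_coeffs f) w = f w" if "w \<noteq> 0" for w
    using sums_unique[OF laurent_expansion[OF Hol_kl_holomorphic[OF f] that]]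
    by (simp add: laurent_sum_def laurent_term_def laurent_coeffs_def)
  then show "laurent_synthesis k l (laurent_coeffs f) z = f z"
    using f rotation_average_Hol_kl[OF k f]
    by (auto simp: laurent_synthesis_def Hol_kl_iff cong: rotation_average_cong)
qed

theorem mainTheorem4:
  fixes k l :: nat
  assumes "k \<ge> 1"
  shows "tame_frechet (Hol_kl k l) hol_norm"
  unfolding tame_frechet_def
  using graded_frechet_Hol_kl banach_on_coord_space tame_map_laurent_coeffs
    tame_map_laurent_synthesis[OF assms] laurent_synthesis_laurent_coeffs[OF assms]
  by blast

end
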